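(* For every integer $n\ge 0$, $$l_{3n}(1,2,-1,q)\,[3n+1]=(-1)^n q^{\frac{n(3n-1)}{2}}[n+1],$$ $$l_{3n+1}(1,2,-1,q)\,[3n+2]=(-1)^n q^{\frac{n(3n+1)}{2}}[n+1]\,(1+q^{n+1}),$$ $$l_{3n+2}(1,2,-1,q)\,[3n+3]=(-1)^n q^{\frac{3n^2+5n+4}{2}}[n+1].$$
   Context: $q$ is an indeterminate; $[n]=\frac{1-q^n}{1-q}$, $[n]!=[1]\cdots[n]$, $[0]!=1$. For an integer $m\ge0$, $$l_n(x,m,s,q)=\sum_{k=0}^{\lfloor n/2\rfloor}s^k q^{\binom k2}\frac{[n]!}{[k]!\,[n-2k]!}\,\frac{[m+n-k-1]!}{[m+n-1]!}\,x^{n-2k}\quad (n\ge1),\qquad l_0(x,m,s,q)=1.$$ *)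

theory Defs
  imports "HOL-Computational_Algebra.Polynomial" "HOL-Computational_Algebra.Fraction_Field"
begin

definition qX :: "int poly fract" where
  "qX = Fract [:0, 1:] 1"

definition qint :: "'a::field \<Rightarrow> nat \<Rightarrow> 'a" where
  "qint q n = (1 - q ^ n) / (1 - q)"

definition qfact :: "'a::field \<Rightarrow> nat \<Rightarrow> 'a" where
  "qfact q n = (\<Prod>i = 1..n. qint q i)"

definition lpoly :: "nat \<Rightarrow> 'a::field \<Rightarrow> nat \<Rightarrow> 'a \<Rightarrow> 'a \<Rightarrow> 'a" where
  "lpoly n x m s q =
     (if n = 0 then 1 else
      (\<Sum>k = 0..n div 2. s ^ k * q ^ (k choose 2)
          * (qfact q n / (qfact q k * qfact q (n - 2 * k)))
          * (qfact q (m + n - k - 1) / qfact q (m + n - 1))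
          * x ^ (n - 2 * k)))"

end

(*
  Let F_n(x) = sum_k (-1)^k q^(k choose 2) [n-k choose k]_q x^k be the q-Fibonacci
  polynomial.  Since [n+1-k](1-q) = 1 - q^(n+1-k), the definition of l_n with m = 2 gives
      (1-q) [n+1] l_n(1,2,-1,q) = F_n(1) - q^(n+1) F_n(1/q).
  The two q-Pascal rules for Gaussian binomials give the recurrences
      F_(n+2)(x) = F_(n+1)(qx) - x F_n(qx)   and   F_(n+2)(x) = F_(n+1)(x) - x q^n F_n(x/q),
  so u_n = F_n(1) and v_n = F_n(1/q) satisfy a coupled linear system; its solution is
  periodic modulo 3 up to signed pentagonal powers of q, which gives the three identities.
*)
theory Submission
  imports Defs
begin

section \<open>q-integers and Gaussian binomials at a generic q\<close>

lemma qfact_0 [simp]: "qfact q 0 = 1"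
  by (simp add: qfact_def)

lemma qfact_Suc: "qfact q (Suc n) = qfact q n * qint q (Suc n)"
  by (simp add: qfact_def prod.nat_ivl_Suc')

lemma qint_0 [simp]: "qint q 0 = 0"
  by (simp add: qint_def)

definition qbinom :: "'a::field \<Rightarrow> nat \<Rightarrow> nat \<Rightarrow> 'a" where
  "qbinom q N k = (if k \<le> N then qfact q N / (qfact q k * qfact q (N - k)) else 0)"

text \<open>All denominators \<open>[i]\<close> and \<open>[i]!\<close> are nonzero as soon as q is not a root of unity.\<close>
locale generic_q =
  fixes q :: "'a::field"
  assumes not_root_of_unity: "\<And>i. i \<ge> 1 \<Longrightarrow> q ^ i \<noteq> 1"
begin

lemma q_ne_1: "q \<noteq> 1"
  using not_root_of_unity[of 1] by simp

lemma qint_nonzero: "i \<ge> 1 \<Longrightarrow> qint q i \<noteq> 0"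
  using not_root_of_unity[of i] q_ne_1 by (simp add: qint_def)

lemma qfact_nonzero: "qfact q n \<noteq> 0"
  by (induction n) (simp_all add: qfact_Suc qint_nonzero)

text \<open>\<open>[a + b] = [a] + q\<^sup>a [b]\<close>: the source of both q-Pascal rules.\<close>
lemma qint_add: "qint q (a + b) = qint q a + q ^ a * qint q b"
  using q_ne_1 by (simp add: qint_def power_add field_simps)

lemma qint_times_1_minus_q: "qint q n * (1 - q) = 1 - q ^ n"
  using q_ne_1 by (simp add: qint_def)

lemma qbinom_0 [simp]: "qbinom q N 0 = 1"
  by (simp add: qbinom_def qfact_nonzero)

lemma qbinom_eq_0: "N < k \<Longrightarrow> qbinom q N k = 0"
  by (simp add: qbinom_def)

text \<open>Two ratio formulas expressing neighbouring Gaussian binomials through \<open>[N choose k]\<^sub>q\<close>;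
  they hold for all k because \<open>[0] = 0\<close>.\<close>
lemma qbinom_Suc_Suc: "qbinom q (Suc N) (Suc k) = qbinom q N k * qint q (Suc N) / qint q (Suc k)"
proof (cases "k \<le> N")
  case True
  then have "Suc N - Suc k = N - k" by simp
  with True show ?thesis
    by (simp add: qbinom_def qfact_Suc qfact_nonzero qint_nonzero field_simps)
qed (simp add: qbinom_def)

lemma qbinom_Suc_right: "qbinom q N (Suc k) = qbinom q N k * qint q (N - k) / qint q (Suc k)"
proof (cases "k < N")
  case True
  then have "N - k = Suc (N - Suc k)" by simp
  with True show ?thesis
    by (simp add: qbinom_def qfact_Suc qfact_nonzero qint_nonzero field_simps)
qed (simp add: qbinom_def)

lemma qbinom_pascal1:
  "qbinom q (Suc N) (Suc k) = q ^ Suc k * qbinom q N (Suc k) + qbinom q N k"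
proof (cases "k \<le> N")
  case True
  then have "qint q (Suc N) = qint q (Suc k) + q ^ Suc k * qint q (N - k)"
    using qint_add[of "Suc k" "N - k"] by simp
  then show ?thesis
    unfolding qbinom_Suc_Suc qbinom_Suc_right[of N k] by (simp add: qint_nonzero field_simps)
qed (simp add: qbinom_eq_0)

lemma qbinom_pascal2:
  "qbinom q (Suc N) (Suc k) = qbinom q N (Suc k) + q ^ (N - k) * qbinom q N k"
proof (cases "k \<le> N")
  case True
  then have "qint q (Suc N) = qint q (N - k) + q ^ (N - k) * qint q (Suc k)"
    using qint_add[of "N - k" "Suc k"] by simp
  then show ?thesis
    unfolding qbinom_Suc_Suc qbinom_Suc_right[of N k] by (simp add: qint_nonzero field_simps)
qed (simp add: qbinom_eq_0)

end

section \<open>q-Fibonacci polynomials\<close>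

definition qfib_coeff :: "'a::field \<Rightarrow> nat \<Rightarrow> nat \<Rightarrow> 'a" where
  "qfib_coeff q n k = (-1) ^ k * q ^ (k choose 2) * qbinom q (n - k) k"

definition qfib :: "'a::field \<Rightarrow> nat \<Rightarrow> 'a \<Rightarrow> 'a" where
  "qfib q n x = (\<Sum>k\<le>n. qfib_coeff q n k * x ^ k)"

lemma choose_2_Suc: "Suc k choose 2 = (k choose 2) + k"
  by (cases k) (simp_all add: numeral_2_eq_2)

context generic_q
begin

lemma qfib_coeff_0 [simp]: "qfib_coeff q n 0 = 1"
  by (simp add: qfib_coeff_def binomial_eq_0)

lemma qfib_coeff_eq_0: "n < k \<Longrightarrow> qfib_coeff q n k = 0"
  by (simp add: qfib_coeff_def qbinom_eq_0)

lemma qfib_coeff_rec1: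
  "qfib_coeff q (Suc (Suc n)) (Suc k) = q ^ Suc k * qfib_coeff q (Suc n) (Suc k) - q ^ k * qfib_coeff q n k"
proof (cases "k \<le> n")
  case True
  then have "Suc (Suc n) - Suc k = Suc (n - k)" "Suc n - Suc k = n - k" by simp_all
  then show ?thesis
    by (simp add: qfib_coeff_def qbinom_pascal1 choose_2_Suc power_add algebra_simps)
qed (simp add: qfib_coeff_def qbinom_eq_0)

lemma qfib_coeff_rec2:
  "qfib_coeff q (Suc (Suc n)) (Suc k) = qfib_coeff q (Suc n) (Suc k) - q ^ (n - k) * qfib_coeff q n k"
proof (cases "k \<le> n")
  case True
  then have "Suc (Suc n) - Suc k = Suc (n - k)" "Suc n - Suc k = n - k" by simp_all
  moreover have "q ^ (n - k) * qfib_coeff q n k = q ^ k * q ^ (n - k - k) * qfib_coeff q n k"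
  proof (cases "k \<le> n - k")
    case True
    then show ?thesis by (simp flip: power_add)
  qed (simp add: qfib_coeff_def qbinom_eq_0)
  ultimately show ?thesis
    by (simp only:) (simp add: qfib_coeff_def qbinom_pascal2 choose_2_Suc power_add algebra_simps)
qed (simp add: qfib_coeff_def qbinom_eq_0)

lemma qfib_shift: "qfib q (Suc n) x = 1 + (\<Sum>k\<le>n. qfib_coeff q (Suc n) (Suc k) * x ^ Suc k)"
  unfolding qfib_def by (subst sum.atMost_Suc_shift) simp

lemma qfib_extend: "qfib q n x = (\<Sum>k\<le>Suc n. qfib_coeff q n k * x ^ k)"
  unfolding qfib_def by (simp add: qfib_coeff_eq_0)

lemma qfib_0 [simp]: "qfib q 0 x = 1"
  by (simp add: qfib_def binomial_eq_0)

lemma qfib_1 [simp]: "qfib q (Suc 0) x = 1"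
  by (simp add: qfib_def qfib_coeff_def qbinom_eq_0 binomial_eq_0)

lemma qfib_rec1: "qfib q (Suc (Suc n)) x = qfib q (Suc n) (q * x) - x * qfib q n (q * x)"
proof -
  have "qfib q (Suc (Suc n)) x
      = 1 + (\<Sum>k\<le>Suc n. qfib_coeff q (Suc n) (Suc k) * (q * x) ^ Suc k
                       - x * (qfib_coeff q n k * (q * x) ^ k))"
    unfolding qfib_shift qfib_coeff_rec1 by (simp add: power_mult_distrib algebra_simps)
  also have "\<dots> = qfib q (Suc n) (q * x) - x * qfib q n (q * x)"
    unfolding sum_subtractf qfib_shift[of n] qfib_extend[of n] sum_distrib_left
    by (simp add: qfib_coeff_eq_0)
  finally show ?thesis .
qed

lemma qfib_rec2:
  assumes "q \<noteq> 0"
  shows "qfib q (Suc (Suc n)) x = qfib q (Suc n) x - x * q ^ n * qfib q n (x / q)"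
proof -
  have summand: "q ^ (n - k) * qfib_coeff q n k * x ^ Suc k = x * q ^ n * (qfib_coeff q n k * (x / q) ^ k)"
    for k
  proof (cases "k \<le> n")
    case True
    then have "q ^ n = q ^ (n - k) * q ^ k" by (simp flip: power_add)
    then show ?thesis using assms by (simp add: power_divide)
  qed (simp add: qfib_coeff_eq_0)
  have "qfib q (Suc (Suc n)) x
      = 1 + (\<Sum>k\<le>Suc n. qfib_coeff q (Suc n) (Suc k) * x ^ Suc k
                       - x * q ^ n * (qfib_coeff q n k * (x / q) ^ k))"
    unfolding qfib_shift qfib_coeff_rec2 left_diff_distrib summand[symmetric] ..
  also have "\<dots> = qfib q (Suc n) x - x * q ^ n * qfib q n (x / q)"
    unfolding sum_subtractf qfib_shift[of n] qfib_extend[of n] sum_distrib_left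
    by (simp add: qfib_coeff_eq_0)
  finally show ?thesis .
qed

end

section \<open>The polynomial \<open>l\<^sub>n(1,2,-1,q)\<close> via q-Fibonacci polynomials\<close>

context generic_q
begin

lemma lpoly_summand:
  assumes "2 * k \<le> n"
  shows "qfact q n / (qfact q k * qfact q (n - 2 * k)) * (qfact q (2 + n - k - 1) / qfact q (2 + n - 1))
           * qint q (Suc n)
         = qbinom q (n - k) k * qint q (Suc n - k)"
proof -
  have "2 + n - k - 1 = Suc (n - k)" "2 + n - 1 = Suc n" "Suc n - k = Suc (n - k)" "n - k - k = n - 2 * k"
    using assms by simp_all
  with assms show ?thesis
    by (simp add: qbinom_def qfact_Suc qfact_nonzero qint_nonzero field_simps)
qed

lemma lpoly_times_qint:
  "lpoly n 1 2 (-1) q * qint q (Suc n) = (\<Sum>k\<le>n. qfib_coeff q n k * qint q (Suc n - k))"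
proof (cases "n = 0")
  case False
  have "lpoly n 1 2 (-1) q * qint q (Suc n)
      = (\<Sum>k = 0..n div 2. (-1) ^ k * q ^ (k choose 2) *
           (qfact q n / (qfact q k * qfact q (n - 2 * k)) * (qfact q (2 + n - k - 1) / qfact q (2 + n - 1))
            * qint q (Suc n)))"
    using False by (simp add: lpoly_def sum_distrib_right mult.assoc)
  also have "\<dots> = (\<Sum>k = 0..n div 2. qfib_coeff q n k * qint q (Suc n - k))"
  proof (rule sum.cong)
    fix k assume "k \<in> {0..n div 2}"
    then have "2 * k \<le> n" by simp
    then show "(-1) ^ k * q ^ (k choose 2) *
           (qfact q n / (qfact q k * qfact q (n - 2 * k)) * (qfact q (2 + n - k - 1) / qfact q (2 + n - 1))
            * qint q (Suc n)) = qfib_coeff q n k * qint q (Suc n - k)"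
      by (simp only: lpoly_summand) (simp add: qfib_coeff_def)
  qed simp
  also have "\<dots> = (\<Sum>k\<le>n. qfib_coeff q n k * qint q (Suc n - k))"
    by (rule sum.mono_neutral_left) (auto simp: qfib_coeff_def qbinom_eq_0)
  finally show ?thesis .
qed (simp add: lpoly_def qint_def)

lemma lpoly_qfib:
  assumes "q \<noteq> 0"
  shows "lpoly n 1 2 (-1) q * qint q (Suc n) * (1 - q) = qfib q n 1 - q ^ Suc n * qfib q n (1 / q)"
proof -
  have "qfib_coeff q n k * qint q (Suc n - k) * (1 - q)
          = qfib_coeff q n k * 1 ^ k - q ^ Suc n * (qfib_coeff q n k * (1 / q) ^ k)" if "k \<le> n" for k
  proof -
    have "q ^ Suc n = q ^ (Suc n - k) * q ^ k" using that by (simp flip: power_add)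
    then have "q ^ Suc n * (1 / q) ^ k = q ^ (Suc n - k)"
      using assms by (simp add: power_one_over)
    have "qfib_coeff q n k * qint q (Suc n - k) * (1 - q) = qfib_coeff q n k * (1 - q ^ (Suc n - k))"
      by (simp only: mult.assoc qint_times_1_minus_q)
    then show ?thesis
      by (simp add: \<open>q ^ Suc n * (1 / q) ^ k = q ^ (Suc n - k)\<close>[symmetric] algebra_simps)
  qed
  then show ?thesis
    unfolding lpoly_times_qint sum_distrib_right qfib_def sum_distrib_left sum_subtractf[symmetric]
    by (intro sum.cong) simp_all
qed

end

section \<open>Solving the recurrence system at \<open>x = 1\<close> and \<open>x = 1/q\<close>\<close>

definition pent :: "nat \<Rightarrow> nat" where
  "pent m = m * (3 * m - 1) div 2"

lemma pent_Suc: "pent (Suc m) = pent m + 3 * m + 1"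
proof -
  have "Suc m * (3 * Suc m - 1) = m * (3 * m - 1) + 2 * (3 * m + 1)"
    by (cases m) (simp_all add: algebra_simps)
  then show ?thesis unfolding pent_def by simp
qed

lemma pent_plus: "m * (3 * m + 1) div 2 = pent m + m"
proof -
  have "m * (3 * m + 1) = m * (3 * m - 1) + 2 * m"
    by (cases m) (simp_all add: algebra_simps)
  then show ?thesis unfolding pent_def by simp
qed

text \<open>Writing \<open>u\<^sub>n = F\<^sub>n(1)\<close> and \<open>v\<^sub>n = F\<^sub>n(1/q)\<close>, the two recurrences of the q-Fibonacci polynomials
  give a coupled system, whose solution is periodic modulo 3 up to pentagonal powers of q.\<close>
lemma pentagonal_solution:
  fixes q :: "'a::field" and u v :: "nat \<Rightarrow> 'a"
  assumes q: "q \<noteq> 0"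
    and u_rec: "\<And>n. u (n + 2) = u (n + 1) - q ^ n * v n"
    and v_rec: "\<And>n. v (n + 2) = u (n + 1) - u n / q"
    and init: "u 0 = 1" "u 1 = 1" "v 0 = 1" "v 1 = 1"
  shows "u (3 * m) = (-1) ^ m * q ^ pent m
       \<and> u (3 * m + 1) = (-1) ^ m * q ^ pent m * q ^ m
       \<and> u (3 * m + 2) = 0
       \<and> v (3 * m) = (-1) ^ m * q ^ pent m / q ^ (2 * m)
       \<and> v (3 * m + 1) = (-1) ^ m * q ^ pent m
       \<and> v (3 * m + 2) = (-1) ^ m * q ^ pent m * q ^ m * (1 - 1 / q ^ (m + 1))"
proof (induction m)
  case 0
  have "u 2 = 0" "v 2 = 1 - 1 / q"
    using u_rec[of 0] v_rec[of 0] init by (simp_all add: numeral_2_eq_2)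
  with init show ?case by (simp add: pent_def numeral_2_eq_2)
next
  case (Suc m)
  define c where "c = (-1) ^ m * q ^ pent m"
  have u0: "u (3 * m + 2) = 0" and u1: "u (3 * m + 1) = c * q ^ m"
    and v1: "v (3 * m + 1) = c" and v2: "v (3 * m + 2) = c * q ^ m * (1 - 1 / q ^ (m + 1))"
    using Suc.IH by (simp_all add: c_def)
  have idx: "3 * m + 3 = Suc (Suc (Suc (3 * m)))" "3 * m + 4 = Suc (3 * m + 3)" "3 * m + 5 = Suc (3 * m + 4)"
    by simp_all
  have r3: "u (3 * m + 3) = u (3 * m + 2) - q ^ (3 * m + 1) * v (3 * m + 1)"
    and s3: "v (3 * m + 3) = u (3 * m + 2) - u (3 * m + 1) / q"
    and r4: "u (3 * m + 4) = u (3 * m + 3) - q ^ (3 * m + 2) * v (3 * m + 2)"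
    and s4: "v (3 * m + 4) = u (3 * m + 3) - u (3 * m + 2) / q"
    and r5: "u (3 * m + 5) = u (3 * m + 4) - q ^ (3 * m + 3) * v (3 * m + 3)"
    and s5: "v (3 * m + 5) = u (3 * m + 4) - u (3 * m + 3) / q"
    using u_rec[of "3 * m + 1"] v_rec[of "3 * m + 1"] u_rec[of "3 * m + 2"] v_rec[of "3 * m + 2"]
      u_rec[of "3 * m + 3"] v_rec[of "3 * m + 3"]
    by (simp_all add: idx)
  have pow_3m: "q ^ (3 * m) = q ^ m * q ^ (2 * m)"
    by (simp flip: power_add)
  have u3: "u (3 * m + 3) = - c * q ^ (3 * m + 1)"
    unfolding r3 u0 v1 by simp
  have v3: "v (3 * m + 3) = - c * q ^ (3 * m + 1) / q ^ (2 * Suc m)"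
    unfolding s3 u0 u1 using q pow_3m by (simp add: power_add field_simps)
  have u4: "u (3 * m + 4) = - c * q ^ (3 * m + 1) * q ^ Suc m"
    unfolding r4 u3 v2 using q by (simp add: power_add field_simps)
  have v4: "v (3 * m + 4) = - c * q ^ (3 * m + 1)"
    unfolding s4 u3 u0 by simp
  have u5: "u (3 * m + 5) = 0"
    unfolding r5 u4 v3 using q pow_3m by (simp add: power_add power3_eq_cube field_simps)
  have v5: "v (3 * m + 5) = - c * q ^ (3 * m + 1) * q ^ Suc m * (1 - 1 / q ^ (Suc m + 1))"
    unfolding s5 u4 u3 using q by (simp add: power_add field_simps)
  have next_idx: "3 * Suc m = 3 * m + 3" "3 * m + 3 + 1 = 3 * m + 4" "3 * m + 3 + 2 = 3 * m + 5"
    by simp_all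
  show ?case
    unfolding next_idx u3 u4 u5 v3 v4 v5 c_def pent_Suc by (simp add: power_add)
qed

context generic_q
begin

lemma qfib_pentagonal:
  assumes q: "q \<noteq> 0"
  shows "qfib q (3 * m) 1 = (-1) ^ m * q ^ pent m
       \<and> qfib q (3 * m + 1) 1 = (-1) ^ m * q ^ pent m * q ^ m
       \<and> qfib q (3 * m + 2) 1 = 0
       \<and> qfib q (3 * m) (1 / q) = (-1) ^ m * q ^ pent m / q ^ (2 * m)
       \<and> qfib q (3 * m + 1) (1 / q) = (-1) ^ m * q ^ pent m
       \<and> qfib q (3 * m + 2) (1 / q) = (-1) ^ m * q ^ pent m * q ^ m * (1 - 1 / q ^ (m + 1))"
proof (rule pentagonal_solution[OF q])
  show "qfib q (n + 2) 1 = qfib q (n + 1) 1 - q ^ n * qfib q n (1 / q)" for n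
    using qfib_rec2[OF q, of n 1] by simp
  show "qfib q (n + 2) (1 / q) = qfib q (n + 1) 1 - qfib q n 1 / q" for n
    using qfib_rec1[of n "1 / q"] q by simp
qed simp_all

lemma lpoly_pentagonal:
  assumes q: "q \<noteq> 0"
  shows "lpoly (3*n) 1 2 (-1) q * qint q (3*n+1)
           = (-1) ^ n * q ^ (n * (3*n - 1) div 2) * qint q (n+1)
       \<and> lpoly (3*n+1) 1 2 (-1) q * qint q (3*n+2)
           = (-1) ^ n * q ^ (n * (3*n + 1) div 2) * qint q (n+1) * (1 + q ^ (n+1))
       \<and> lpoly (3*n+2) 1 2 (-1) q * qint q (3*n+3)
           = (-1) ^ n * q ^ ((3*n^2 + 5*n + 4) div 2) * qint q (n+1)"
proof -
  have lpoly_eq: "lpoly N 1 2 (-1) q * qint q (N + 1) = (qfib q N 1 - q ^ (N + 1) * qfib q N (1 / q)) / (1 - q)"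
    for N using lpoly_qfib[OF q, of N] q_ne_1 by (simp add: field_simps)
  define c where "c = (-1) ^ n * q ^ pent n"
  have u0: "qfib q (3 * n) 1 = c" and u1: "qfib q (3 * n + 1) 1 = c * q ^ n"
    and u2: "qfib q (3 * n + 2) 1 = 0" and v0: "qfib q (3 * n) (1 / q) = c / q ^ (2 * n)"
    and v1: "qfib q (3 * n + 1) (1 / q) = c" and v2: "qfib q (3 * n + 2) (1 / q) = c * q ^ n * (1 - 1 / q ^ (n + 1))"
    using qfib_pentagonal[OF q, of n] by (simp_all add: c_def)
  have index: "3 * n + 1 + 1 = 3 * n + 2" "3 * n + 2 + 1 = 3 * n + 3"
    by simp_all
  have power_split: "q ^ (3 * n + 1) = q ^ (2 * n) * q ^ (n + 1)"
    "q ^ (3 * n + 2) = q ^ n * q ^ (n + 1) * q ^ (n + 1)"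
    "q ^ (3 * n + 3) = q ^ (n + 1) * q ^ (2 * n + 2)"
    by (simp_all only: power_add[symmetric]) (rule arg_cong[where f = "power q"], simp)+
  have exponent: "(3*n^2 + 5*n + 4) div 2 = pent n + n + (2 * n + 2)"
  proof -
    have "3*n^2 + 5*n + 4 = n * (3 * n + 1) + 2 * (2 * n + 2)"
      by (simp add: power2_eq_square algebra_simps)
    then show ?thesis using pent_plus[of n] by simp
  qed
  have "lpoly (3 * n) 1 2 (-1) q * qint q (3 * n + 1) = c * qint q (n + 1)"
    unfolding lpoly_eq u0 v0 power_split using q by (simp add: qint_def field_simps)
  moreover have "lpoly (3 * n + 1) 1 2 (-1) q * qint q (3 * n + 2)
      = c * q ^ n * qint q (n + 1) * (1 + q ^ (n + 1))"
    using lpoly_eq[of "3 * n + 1"] unfolding index u1 v1 power_split by (simp add: qint_def field_simps)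
  moreover have "lpoly (3 * n + 2) 1 2 (-1) q * qint q (3 * n + 3)
      = c * q ^ n * q ^ (2 * n + 2) * qint q (n + 1)"
  proof -
    have "0 - q ^ (n + 1) * q ^ (2 * n + 2) * (c * q ^ n * (1 - 1 / q ^ (n + 1)))
        = c * q ^ n * q ^ (2 * n + 2) * (1 - q ^ (n + 1))"
      using q by (simp add: field_simps)
    then show ?thesis
      using lpoly_eq[of "3 * n + 2"] unfolding index u2 v2 power_split by (simp add: qint_def)
  qed
  ultimately show ?thesis
    unfolding c_def pent_def[symmetric] pent_plus exponent power_add by simp
qed

end

lemma qX_power: "qX ^ i = Fract ([:0, 1:] ^ i) 1"
  by (induction i) (simp_all add: qX_def One_fract_def)

lemma qX_nonzero: "qX \<noteq> 0"
  by (simp add: qX_def Zero_fract_def eq_fract)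

text \<open>It is not a root of unity, since \<open>q\<^sup>i\<close> has degree i.\<close>
lemma qX_generic: "generic_q qX"
proof
  fix i :: nat
  assume "i \<ge> 1"
  have "degree ([:0, 1:] ^ i :: int poly) = i"
    by (simp add: degree_power_eq)
  with \<open>i \<ge> 1\<close> have "([:0, 1:] ^ i :: int poly) \<noteq> 1"
    by auto
  then show "qX ^ i \<noteq> 1"
    by (simp add: qX_power One_fract_def eq_fract)
qed

theorem mainTheorem11:
  fixes n :: nat
  shows "lpoly (3*n) 1 2 (-1) qX * qint qX (3*n+1)
           = (-1) ^ n * qX ^ (n * (3*n - 1) div 2) * qint qX (n+1)
       \<and> lpoly (3*n+1) 1 2 (-1) qX * qint qX (3*n+2)
           = (-1) ^ n * qX ^ (n * (3*n + 1) div 2) * qint qX (n+1) * (1 + qX ^ (n+1))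
       \<and> lpoly (3*n+2) 1 2 (-1) qX * qint qX (3*n+3)
           = (-1) ^ n * qX ^ ((3*n^2 + 5*n + 4) div 2) * qint qX (n+1)"
  by (rule generic_q.lpoly_pentagonal[OF qX_generic qX_nonzero])

end
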